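(* The modulus multifunction $\mathrm{mod}\colon C([0,1])\rightrightarrows\mathbb N^{\mathbb N}$, which assigns to $f$ the set of all moduli of continuity of $f$, is not computable in polynomial time on the parametrised space $C(I)_i$ of interval functions.
   Context: Fix a finite non-empty alphabet $\Sigma$ and Baire space $\mathcal B=\Sigma^{*\Sigma^*}$. Oracle machines $M^?$ query an oracle $\varphi\in\mathcal B$ (a query costs one step); $M^\varphi(\mathbf a)$ is the output, $\mathrm{Time}_{M^?}(\varphi,\mathbf a)$ the step count. The size of $\varphi$ is $|\varphi|(n)=\max_{|\mathbf a|\le n}|\varphi(\mathbf a)|$. Second-order polynomials: smallest class of functions $\mathbb N^{\mathbb N}\times\mathbb N\to\mathbb N$ containing $(l,n)\mapsto p(n)$ for $p\in\mathbb N[X]$, closed under $P\mapsto((l,n)\mapsto l(P(l,n)))$, pointwise sum and product. For a partial surjection $\xi\colon\subseteq\mathcal B\to X$ and $\mu\colon\mathrm{dom}(\xi)\to\mathbb N^{\mathbb N}$ with non-decreasing values, $(X,\xi,\mu)$ is a preparametrised space. A multifunction $f\colon X\rightrightarrows Y$ between such spaces is computable in polynomial time if some oracle machine $M^?$ and second-order polynomials $P,Q$ satisfy for all $\varphi\in\mathrm{dom}(\xi_X)$: $M^\varphi$ total with $\xi_Y(M^\varphi)\in f(\xi_X(\varphi))$, $\mathrm{Time}_{M^?}(\varphi,\mathbf a)\le P(\mu_X(\varphi),|\mathbf a|)$, $\mu_Y(M^\varphi)(n)\le Q(\mu_X(\varphi),n)$. Here $\mathbb N^{\mathbb N}$ carries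 the total representation $\xi(\varphi)(n)=|\varphi(\mathtt1^n)|$ with the standard parameter (the size function). A function $\nu\colon\mathbb N\to\mathbb N$ is a modulus of continuity of $f\in C([0,1])$ if $|x-y|\le2^{-\nu(n)}$ implies $|f(x)-f(y)|\le2^{-n}$ for all $x,y\in[0,1]$, $n\in\mathbb N$. Encodings: integers in binary with sign bit; dyadic rationals $\mathbb D$ by finite binary expansion; pairs via a fixed pairing. $\mathrm I\mathbb D$: finite dyadic intervals $[r\pm\varepsilon]=[r-\varepsilon,r+\varepsilon]$ (pair of codes) and $[-\infty,\infty]$; $\mathrm{diam}([r\pm\varepsilon])=2\varepsilon$. A $\xi_{\mathbb R_i}$-name of $x$ is $\varphi\colon\mathbb N\to\mathrm I\mathbb D$ with $(\varphi(n))_n$ nested and $\bigcap_n\varphi(n)=\{x\}$. $C(I)_i=(C([0,1]),\xi_{if},\mu_{if})$: $\psi\colon\mathrm I\mathbb D\to\mathrm I\mathbb D$ is a name of $f$ iff for every $\xi_{\mathbb R_i}$-name $\varphi$ of some $x\in[0,1]$, $\psi\circ\varphi$ is a $\xi_{\mathbb R_i}$-name of $f(x)$; $\mu_{if}(\psi)(n)=\lceil\mathrm{lb}(\|f\|_\infty+1)\rceil+\min\{N\mid\forall J\in\mathrm I\mathbb D:\mathrm{diam}(J)\le2^{-N}\Rightarrow\mathrm{diam}(\psi(J))\le2^{-n}\}$. *)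

theory Defs
  imports Complex_Main "HOL-Computational_Algebra.Polynomial" "HOL-Library.Extended_Real"
begin

text \<open>Alphabet Sigma = bool (True plays the role of the symbol 1, False of 0).\<close>

type_synonym word = "bool list"
type_synonym baire = "word \<Rightarrow> word"

text \<open>Tape symbols are bool option (None = blank).
  States are 0 ..< nstates; 0 = start, 1 = halt, 2 = query, 3 = state entered after a query.
  Tape 0 initially holds the input and holds the output when the machine halts; tape 1 is
  the oracle (query/answer) tape. In the query state, the word written on tape 1 (from cell 0 up
  to the first blank) is replaced by the oracle answer, the head of tape 1 is reset to cell 0,
  and the machine enters state 3; this costs one step.\<close>

record otm =
  ntapes :: nat
  nstates :: nat
  delta :: "nat \<Rightarrow> bool option list \<Rightarrow> nat \<times> bool option list \<times> int list"

definition wf_otm :: "otm \<Rightarrow> bool" where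
  "wf_otm M \<longleftrightarrow> ntapes M \<ge> 2 \<and> nstates M \<ge> 4 \<and>
     (\<forall>q < nstates M. \<forall>syms. length syms = ntapes M \<longrightarrow>
        (case delta M q syms of (q', ws, mv) \<Rightarrow>
           q' < nstates M \<and> length ws = ntapes M \<and> length mv = ntapes M \<and>
           (\<forall>m \<in> set mv. m \<in> {-1, 0, 1})))"

type_synonym tape = "int \<Rightarrow> bool option"
type_synonym config = "nat \<times> (nat \<Rightarrow> tape) \<times> (nat \<Rightarrow> int)"

definition read_word :: "tape \<Rightarrow> word" where
  "read_word t = map (\<lambda>i. the (t (int i))) [0..<(LEAST k::nat. t (int k) = None)]"

definition write_word :: "word \<Rightarrow> tape" where
  "write_word w = (\<lambda>i. if 0 \<le> i \<and> nat i < length w then Some (w ! nat i) else None)"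

definition otm_step :: "otm \<Rightarrow> baire \<Rightarrow> config \<Rightarrow> config" where
  "otm_step M \<phi> c = (case c of (q, tp, hs) \<Rightarrow>
     if q = 1 then c
     else if q = 2 then (3, tp(1 := write_word (\<phi> (read_word (tp 1)))), hs(1 := 0))
     else (case delta M q (map (\<lambda>i. tp i (hs i)) [0..<ntapes M]) of (q', ws, mv) \<Rightarrow>
       (q', (\<lambda>i. if i < ntapes M then (tp i)(hs i := ws ! i) else tp i),
            (\<lambda>i. if i < ntapes M then hs i + mv ! i else hs i))))"

definition otm_init :: "word \<Rightarrow> config" where
  "otm_init a = (0, (\<lambda>i. if i = 0 then write_word a else (\<lambda>_. None)), (\<lambda>_. 0))"

definition otm_run :: "otm \<Rightarrow> baire \<Rightarrow> word \<Rightarrow> nat \<Rightarrow> config" where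
  "otm_run M \<phi> a t = (otm_step M \<phi> ^^ t) (otm_init a)"

definition otm_halts :: "otm \<Rightarrow> baire \<Rightarrow> word \<Rightarrow> bool" where
  "otm_halts M \<phi> a \<longleftrightarrow> (\<exists>t. fst (otm_run M \<phi> a t) = 1)"

definition otm_time :: "otm \<Rightarrow> baire \<Rightarrow> word \<Rightarrow> nat" where
  "otm_time M \<phi> a = (LEAST t. fst (otm_run M \<phi> a t) = 1)"

definition otm_out :: "otm \<Rightarrow> baire \<Rightarrow> baire" where
  "otm_out M \<phi> a = read_word (fst (snd (otm_run M \<phi> a (otm_time M \<phi> a))) 0)"

inductive_set sopoly :: "((nat \<Rightarrow> nat) \<Rightarrow> nat \<Rightarrow> nat) set" where
  const_poly: "(\<lambda>l n. poly (p :: nat poly) n) \<in> sopoly"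
| apply_fn: "P \<in> sopoly \<Longrightarrow> (\<lambda>l n. l (P l n)) \<in> sopoly"
| plus: "P \<in> sopoly \<Longrightarrow> Q \<in> sopoly \<Longrightarrow> (\<lambda>l n. P l n + Q l n) \<in> sopoly"
| times: "P \<in> sopoly \<Longrightarrow> Q \<in> sopoly \<Longrightarrow> (\<lambda>l n. P l n * Q l n) \<in> sopoly"

text \<open>Representations are given as relations xi phi x ("phi is a name of x");
  the domain of xi is the set of phi having some x. Parameters mu :: baire => nat => nat.\<close>

definition poly_time_computable ::
  "(baire \<Rightarrow> 'x \<Rightarrow> bool) \<Rightarrow> (baire \<Rightarrow> nat \<Rightarrow> nat) \<Rightarrow>
   (baire \<Rightarrow> 'y \<Rightarrow> bool) \<Rightarrow> (baire \<Rightarrow> nat \<Rightarrow> nat) \<Rightarrow> ('x \<Rightarrow> 'y set) \<Rightarrow> bool" where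
  "poly_time_computable \<xi>X \<mu>X \<xi>Y \<mu>Y F \<longleftrightarrow>
     (\<exists>M P Q. wf_otm M \<and> P \<in> sopoly \<and> Q \<in> sopoly \<and>
        (\<forall>\<phi> x. \<xi>X \<phi> x \<longrightarrow>
           (\<forall>a. otm_halts M \<phi> a) \<and>
           (\<exists>y. \<xi>Y (otm_out M \<phi>) y \<and> y \<in> F x) \<and>
           (\<forall>a. otm_time M \<phi> a \<le> P (\<mu>X \<phi>) (length a)) \<and>
           (\<forall>n. \<mu>Y (otm_out M \<phi>) n \<le> Q (\<mu>X \<phi>) n)))"

definition xi_NN :: "baire \<Rightarrow> (nat \<Rightarrow> nat) \<Rightarrow> bool" where
  "xi_NN \<phi> g \<longleftrightarrow> g = (\<lambda>n. length (\<phi> (replicate n True)))"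

definition size_fn :: "baire \<Rightarrow> nat \<Rightarrow> nat" where
  "size_fn \<phi> n = Max {length (\<phi> a) | a. length a \<le> n}"

text \<open>Naturals in binary (least significant bit first, leading zeros allowed).\<close>
fun nat_of_bits :: "word \<Rightarrow> nat" where
  "nat_of_bits [] = 0"
| "nat_of_bits (b # bs) = (if b then 1 else 0) + 2 * nat_of_bits bs"

text \<open>Integers: sign bit (True = negative) followed by the binary digits of the absolute value.\<close>
fun dec_int :: "word \<Rightarrow> int option" where
  "dec_int [] = None"
| "dec_int (s # bs) = Some ((if s then -1 else 1) * int (nat_of_bits bs))"

text \<open>Pairing: <u,v> = u with each bit doubled, then the separator False True, then v.\<close>
fun unpair :: "word \<Rightarrow> (word \<times> word) option" where
  "unpair (a # b # rest) =
     (if a = b then map_option (\<lambda>(u, v). (a # u, v)) (unpair rest)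
      else if \<not> a \<and> b then Some ([], rest) else None)"
| "unpair _ = None"

text \<open>Dyadic rationals: <m, k> with m an integer code and k a natural code denotes m * 2^-k.\<close>
definition dec_dyadic :: "word \<Rightarrow> real option" where
  "dec_dyadic w = (case unpair w of None \<Rightarrow> None
     | Some (u, v) \<Rightarrow> map_option (\<lambda>m. of_int m / 2 ^ nat_of_bits v) (dec_int u))"

datatype ival = IFin real real | IInf

text \<open>Dyadic intervals: True followed by <code r, code eps> for [r +- eps] (eps >= 0);
  the word [False] encodes [-infinity, infinity].\<close>
fun dec_ival :: "word \<Rightarrow> ival option" where
  "dec_ival [] = None"
| "dec_ival (b # w) =
     (if b then (case unpair w of None \<Rightarrow> None
        | Some (u, v) \<Rightarrow> (case (dec_dyadic u, dec_dyadic v) of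
             (Some r, Some e) \<Rightarrow> if e \<ge> 0 then Some (IFin r e) else None
           | _ \<Rightarrow> None))
      else if w = [] then Some IInf else None)"

fun ival_set :: "ival \<Rightarrow> real set" where
  "ival_set (IFin r e) = {r - e .. r + e}"
| "ival_set IInf = UNIV"

fun ival_diam :: "ival \<Rightarrow> ereal" where
  "ival_diam (IFin r e) = ereal (2 * e)"
| "ival_diam IInf = \<infinity>"

text \<open>A name phi : N -> ID of x, given as the sequence of codes n |-> phi(n).\<close>
definition rname :: "(nat \<Rightarrow> word) \<Rightarrow> real \<Rightarrow> bool" where
  "rname s x \<longleftrightarrow> (\<forall>n. dec_ival (s n) \<noteq> None) \<and>
     (\<forall>n. ival_set (the (dec_ival (s (Suc n)))) \<subseteq> ival_set (the (dec_ival (s n)))) \<and>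
     (\<Inter>n. ival_set (the (dec_ival (s n)))) = {x}"

definition fname :: "baire \<Rightarrow> (real \<Rightarrow> real) \<Rightarrow> bool" where
  "fname \<psi> f \<longleftrightarrow> (\<forall>s x. x \<in> {0..1} \<and> rname s x \<longrightarrow> rname (\<psi> \<circ> s) (f x))"

text \<open>Diameter of the interval coded by an output word (non-codes count as infinite).\<close>
definition out_diam :: "word \<Rightarrow> ereal" where
  "out_diam w = (case dec_ival w of Some J \<Rightarrow> ival_diam J | None \<Rightarrow> \<infinity>)"

definition modset :: "baire \<Rightarrow> nat \<Rightarrow> nat set" where
  "modset \<psi> n = {N. \<forall>w J. dec_ival w = Some J \<and> ival_diam J \<le> ereal ((1/2) ^ N)
                     \<longrightarrow> out_diam (\<psi> w) \<le> ereal ((1/2) ^ n)}"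

definition xi_if :: "baire \<Rightarrow> (real \<Rightarrow> real) \<Rightarrow> bool" where
  "xi_if \<psi> f \<longleftrightarrow> continuous_on {0..1} f \<and> fname \<psi> f \<and> (\<forall>n. modset \<psi> n \<noteq> {})"

definition sup_norm01 :: "(real \<Rightarrow> real) \<Rightarrow> real" where
  "sup_norm01 f = Sup ((\<lambda>x. \<bar>f x\<bar>) ` {0..1})"

definition mu_if :: "baire \<Rightarrow> nat \<Rightarrow> nat" where
  "mu_if \<psi> n = nat \<lceil>log 2 (sup_norm01 (SOME f. xi_if \<psi> f) + 1)\<rceil> + (LEAST N. N \<in> modset \<psi> n)"

definition moduli :: "(real \<Rightarrow> real) \<Rightarrow> (nat \<Rightarrow> nat) set" where
  "moduli f = {\<nu>. \<forall>n x y. x \<in> {0..1} \<and> y \<in> {0..1} \<and> \<bar>x - y\<bar> \<le> (1/2) ^ \<nu> n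
                     \<longrightarrow> \<bar>f x - f y\<bar> \<le> (1/2) ^ n}"

end

theory Submission
  imports Defs "HOL-Real_Asymp.Real_Asymp"
begin

(* The zero function has the interval name that answers a query [r +- e] with [-e, e]; its
   parameter grows only linearly, so a machine computing moduli in polynomial time queries this
   name fewer than 2^(m+1) times on input 1^(m+5) and outputs some nu. Each query of radius below
   h = 2^-(m+4) comes close to at most one of the 2^(m+1) points of a grid of mesh 4h in [0,1/2],
   so some grid point p stays far from all of them. A tent of height h and half-width at most
   2^-nu at p has a name that agrees with the zero name on every query, so the machine outputs nu
   for it as well; but the tent changes by h > 2^-(m+5) within distance 2^-nu, so nu is no
   modulus value. *)

fun nat_code :: "nat \<Rightarrow> word" where
  "nat_code n = (if n = 0 then [] else odd n # nat_code (n div 2))"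

declare nat_code.simps [simp del]

lemma nat_of_bits_nat_code [simp]: "nat_of_bits (nat_code n) = n"
  by (induction n rule: nat_code.induct) (subst nat_code.simps, simp)

definition int_code :: "int \<Rightarrow> word" where
  "int_code m = (m < 0) # nat_code (nat \<bar>m\<bar>)"

lemma dec_int_int_code [simp]: "dec_int (int_code m) = Some m"
  by (simp add: int_code_def)

definition pair_code :: "word \<Rightarrow> word \<Rightarrow> word" where
  "pair_code u v = concat (map (\<lambda>b. [b, b]) u) @ [False, True] @ v"

lemma unpair_pair_code [simp]: "unpair (pair_code u v) = Some (u, v)"
  by (induction u) (auto simp: pair_code_def)

definition dyadic :: "real \<Rightarrow> bool" where
  "dyadic x \<longleftrightarrow> (\<exists>(m::int) (k::nat). x = m / 2 ^ k)"

lemma dyadic_iff_dec_dyadic: "dyadic x \<longleftrightarrow> (\<exists>w. dec_dyadic w = Some x)"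
proof
  assume "dyadic x"
  then obtain m :: int and k :: nat where "x = m / 2 ^ k"
    by (auto simp: dyadic_def)
  then have "dec_dyadic (pair_code (int_code m) (nat_code k)) = Some x"
    by (simp add: dec_dyadic_def)
  then show "\<exists>w. dec_dyadic w = Some x" ..
next
  assume "\<exists>w. dec_dyadic w = Some x"
  then show "dyadic x"
    unfolding dec_dyadic_def dyadic_def by (auto split: option.splits) blast
qed

lemma ex_dec_ival_IFin_iff:
  "(\<exists>w. dec_ival w = Some (IFin r e)) \<longleftrightarrow> dyadic r \<and> dyadic e \<and> 0 \<le> e"
proof
  assume "\<exists>w. dec_ival w = Some (IFin r e)"
  then obtain b w where "dec_ival (b # w) = Some (IFin r e)"
    by (metis dec_ival.simps(1) neq_Nil_conv option.distinct(1))
  then show "dyadic r \<and> dyadic e \<and> 0 \<le> e"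
    by (auto simp: dyadic_iff_dec_dyadic split: if_splits option.splits)
next
  assume "dyadic r \<and> dyadic e \<and> 0 \<le> e"
  then obtain u v where "dec_dyadic u = Some r" "dec_dyadic v = Some e" "0 \<le> e"
    by (auto simp: dyadic_iff_dec_dyadic)
  then have "dec_ival (True # pair_code u v) = Some (IFin r e)" by simp
  then show "\<exists>w. dec_ival w = Some (IFin r e)" ..
qed

lemma dec_ival_IFinD: "dec_ival w = Some (IFin r e) \<Longrightarrow> dyadic r \<and> dyadic e \<and> 0 \<le> e"
  using ex_dec_ival_IFin_iff by blast

lemma dyadic_of_int: "dyadic (of_int m)"
  unfolding dyadic_def by (rule exI[of _ m], rule exI[of _ 0]) simp

lemma dyadic_numeral: "dyadic (numeral k)"
  using dyadic_of_int[of "numeral k"] by simp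

lemma dyadic_0: "dyadic 0"
  using dyadic_of_int[of 0] by simp

lemma dyadic_of_nat: "dyadic (of_nat n)"
  using dyadic_of_int[of "int n"] by simp

lemma dyadic_half: "dyadic (1 / 2)"
  unfolding dyadic_def by (rule exI[of _ 1], rule exI[of _ 1]) simp

lemma dyadic_add:
  assumes "dyadic x" "dyadic y" shows "dyadic (x + y)"
proof -
  obtain m m' :: int and k k' :: nat where x: "x = m / 2 ^ k" and y: "y = m' / 2 ^ k'"
    using assms unfolding dyadic_def by blast
  have "x + y = of_int (m * 2 ^ k' + m' * 2 ^ k) / 2 ^ (k + k')"
    by (simp add: x y field_simps power_add)
  then show ?thesis unfolding dyadic_def by blast
qed

lemma dyadic_mult:
  assumes "dyadic x" "dyadic y" shows "dyadic (x * y)"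
proof -
  obtain m m' :: int and k k' :: nat where x: "x = m / 2 ^ k" and y: "y = m' / 2 ^ k'"
    using assms unfolding dyadic_def by blast
  have "x * y = of_int (m * m') / 2 ^ (k + k')"
    by (simp add: x y power_add)
  then show ?thesis unfolding dyadic_def by blast
qed

lemma dyadic_uminus: "dyadic x \<Longrightarrow> dyadic (- x)"
  using dyadic_mult[OF dyadic_of_int[of "-1"]] by simp

lemma dyadic_diff: "dyadic x \<Longrightarrow> dyadic y \<Longrightarrow> dyadic (x - y)"
  using dyadic_add[of x "- y"] dyadic_uminus by simp

lemma dyadic_divide_2: "dyadic x \<Longrightarrow> dyadic (x / 2)"
  using dyadic_mult[OF _ dyadic_half] by simp

lemma dyadic_power: "dyadic x \<Longrightarrow> dyadic (x ^ k)"
  by (induction k) (auto intro: dyadic_mult simp: dyadic_of_int[of 1, simplified])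

lemma dyadic_abs: "dyadic x \<Longrightarrow> dyadic \<bar>x\<bar>"
  by (simp add: abs_if dyadic_uminus)

lemma dyadic_min: "dyadic x \<Longrightarrow> dyadic y \<Longrightarrow> dyadic (min x y)"
  by (simp add: min_def)

lemma dyadic_max: "dyadic x \<Longrightarrow> dyadic y \<Longrightarrow> dyadic (max x y)"
  by (simp add: max_def)

lemmas dyadic_intros = dyadic_0 dyadic_numeral dyadic_of_nat dyadic_half dyadic_add dyadic_mult
  dyadic_uminus dyadic_diff dyadic_divide_2 dyadic_power dyadic_abs dyadic_min dyadic_max

definition ival_code :: "real \<Rightarrow> real \<Rightarrow> word" where
  "ival_code a b = (SOME w. dec_ival w = Some (IFin ((a + b) / 2) ((b - a) / 2)))"

lemma dec_ival_ival_code: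
  assumes "dyadic a" "dyadic b" "a \<le> b"
  shows "dec_ival (ival_code a b) = Some (IFin ((a + b) / 2) ((b - a) / 2))"
  unfolding ival_code_def
  by (rule someI_ex) (use assms in \<open>simp add: ex_dec_ival_IFin_iff dyadic_intros\<close>)

lemma ival_set_midpoint_radius: "ival_set (IFin ((a + b) / 2) ((b - a) / 2)) = {a..b}"
  by (simp add: field_simps)

section \<open>Interval names from nested enclosures\<close>

lemma rname_small_interval:
  assumes "rname s x" "0 < \<epsilon>"
  shows "\<exists>n r e. dec_ival (s n) = Some (IFin r e) \<and> e < \<epsilon>"
proof -
  define S where "S n = ival_set (the (dec_ival (s n)))" for n
  have valid: "\<And>n. dec_ival (s n) \<noteq> None" and nest: "\<And>n. S (Suc n) \<subseteq> S n"
    and inter: "(\<Inter>n. S n) = {x}"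
    using assms(1) unfolding rname_def S_def by auto
  have antimono: "S n' \<subseteq> S n" if "n \<le> n'" for n n'
    using lift_Suc_antimono_le[of S, OF nest that] .
  have "x - \<epsilon> \<notin> (\<Inter>n. S n)" "x + \<epsilon> \<notin> (\<Inter>n. S n)"
    using inter assms(2) by auto
  then obtain n1 n2 where "x - \<epsilon> \<notin> S n1" "x + \<epsilon> \<notin> S n2"
    by blast
  then have outside: "x - \<epsilon> \<notin> S (max n1 n2)" "x + \<epsilon> \<notin> S (max n1 n2)"
    using antimono[of n1 "max n1 n2"] antimono[of n2 "max n1 n2"] by auto
  obtain J where J: "dec_ival (s (max n1 n2)) = Some J"
    using valid by blast
  then obtain r e where re: "dec_ival (s (max n1 n2)) = Some (IFin r e)"
    using outside by (cases J) (auto simp: S_def)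
  have "x \<in> S (max n1 n2)" using inter by auto
  then have "e < \<epsilon>" using outside re assms(2) by (auto simp: S_def)
  then show ?thesis using re by blast
qed

definition enclosure_name :: "(real \<Rightarrow> real \<Rightarrow> real) \<Rightarrow> (real \<Rightarrow> real \<Rightarrow> real) \<Rightarrow> baire" where
  "enclosure_name lb ub w =
     (case dec_ival w of Some (IFin r e) \<Rightarrow> ival_code (lb r e) (ub r e) | _ \<Rightarrow> [False])"

lemma enclosure_name_cong:
  assumes "\<And>r e. dec_ival w = Some (IFin r e) \<Longrightarrow> lb r e = lb' r e \<and> ub r e = ub' r e"
  shows "enclosure_name lb ub w = enclosure_name lb' ub' w"
  using assms by (auto simp: enclosure_name_def split: option.split ival.split)

locale enclosure_bounds =
  fixes f :: "real \<Rightarrow> real" and lb ub :: "real \<Rightarrow> real \<Rightarrow> real" and c :: real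
  assumes dyadic_bounds: "\<And>r e. dyadic r \<Longrightarrow> dyadic e \<Longrightarrow> 0 \<le> e \<Longrightarrow> dyadic (lb r e) \<and> dyadic (ub r e)"
    and encloses: "\<And>r e x. x \<in> {r - e..r + e} \<Longrightarrow> lb r e \<le> f x \<and> f x \<le> ub r e"
    and nested: "\<And>r e r' e'. 0 \<le> e' \<Longrightarrow> r - e \<le> r' - e' \<Longrightarrow> r' + e' \<le> r + e \<Longrightarrow>
                   lb r e \<le> lb r' e' \<and> ub r' e' \<le> ub r e"
    and width: "\<And>r e. 0 \<le> e \<Longrightarrow> ub r e - lb r e \<le> c * (2 * e)"
    and c_nonneg: "0 \<le> c"
begin

abbreviation name :: baire where
  "name \<equiv> enclosure_name lb ub"

lemma dec_ival_name:
  assumes "dec_ival w = Some (IFin r e)"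
  shows "dec_ival (name w) = Some (IFin ((lb r e + ub r e) / 2) ((ub r e - lb r e) / 2))"
proof -
  have "dyadic r" "dyadic e" "0 \<le> e" using dec_ival_IFinD[OF assms] by auto
  then show ?thesis
    using assms dyadic_bounds encloses[of r r e] dec_ival_ival_code
    by (simp add: enclosure_name_def)
qed

lemma name_ival_set:
  "dec_ival (name w) \<noteq> None"
  "ival_set (the (dec_ival (name w))) =
     (case dec_ival w of Some (IFin r e) \<Rightarrow> {lb r e..ub r e} | _ \<Rightarrow> UNIV)"
  using dec_ival_name ival_set_midpoint_radius
  by (auto simp: enclosure_name_def split: option.split ival.split)

lemma name_nested:
  assumes "rname s x"
  shows "ival_set (the (dec_ival (name (s (Suc n))))) \<subseteq> ival_set (the (dec_ival (name (s n))))"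
proof (cases "dec_ival (s n)")
  case (Some J)
  show ?thesis
  proof (cases J)
    case (IFin r e)
    obtain J' where J': "dec_ival (s (Suc n)) = Some J'"
      using assms unfolding rname_def by blast
    have sub: "ival_set J' \<subseteq> {r - e..r + e}"
      using assms J' Some IFin unfolding rname_def by (metis option.sel ival_set.simps(1))
    show ?thesis
    proof (cases J')
      case (IFin r' e')
      then have "0 \<le> e'" using dec_ival_IFinD J' by blast
      then have "r - e \<le> r' - e'" "r' + e' \<le> r + e" using sub IFin by auto
      with \<open>0 \<le> e'\<close> show ?thesis
        using nested name_ival_set(2) J' Some \<open>J = IFin r e\<close> IFin by auto
    qed (use sub in auto)
  qed (simp add: name_ival_set Some)
qed (simp add: name_ival_set)

lemma name_encloses:
  assumes "rname s x"
  shows "f x \<in> ival_set (the (dec_ival (name (s n))))"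
proof -
  have "x \<in> ival_set (the (dec_ival (s n)))"
    using assms unfolding rname_def by blast
  then show ?thesis
    using encloses by (auto simp: name_ival_set split: option.split ival.split)
qed

lemma rname_name:
  assumes s: "rname s x"
  shows "rname (name \<circ> s) (f x)"
proof -
  have "y = f x" if y: "\<forall>n. y \<in> ival_set (the (dec_ival (name (s n))))" for y
  proof (rule ccontr)
    assume "y \<noteq> f x"
    define \<epsilon> where "\<epsilon> = \<bar>y - f x\<bar> / (2 * c + 1)"
    have "0 < \<epsilon>" using \<open>y \<noteq> f x\<close> c_nonneg by (simp add: \<epsilon>_def)
    then obtain n r e where re: "dec_ival (s n) = Some (IFin r e)" and "e < \<epsilon>"
      using rname_small_interval[OF s] by blast
    have "0 \<le> e" using dec_ival_IFinD[OF re] by blast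
    have "y \<in> {lb r e..ub r e}" "f x \<in> {lb r e..ub r e}"
      using y[rule_format, of n] name_encloses[OF s, of n] by (simp_all add: name_ival_set re)
    then have "\<bar>y - f x\<bar> \<le> ub r e - lb r e" by auto
    also have "\<dots> \<le> c * (2 * e)" using width \<open>0 \<le> e\<close> .
    also have "\<dots> \<le> 2 * (c * \<epsilon>)"
      using mult_left_mono[of e \<epsilon> c] \<open>e < \<epsilon>\<close> c_nonneg by linarith
    also have "\<dots> < (2 * c + 1) * \<epsilon>" using \<open>0 < \<epsilon>\<close> by (simp add: algebra_simps)
    finally show False using c_nonneg by (simp add: \<epsilon>_def)
  qed
  then show ?thesis
    using name_ival_set(1) name_nested[OF s] name_encloses[OF s] unfolding rname_def by auto
qed

lemma modset_name:
  assumes "c * (1/2) ^ N \<le> (1/2) ^ n"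
  shows "N \<in> modset name n"
  unfolding modset_def
proof (intro CollectI allI impI, elim conjE)
  fix w J assume w: "dec_ival w = Some J" and diam: "ival_diam J \<le> ereal ((1/2) ^ N)"
  show "out_diam (name w) \<le> ereal ((1/2) ^ n)"
  proof (cases J)
    case (IFin r e)
    have "ub r e - lb r e \<le> c * (2 * e)"
      using width dec_ival_IFinD w IFin by blast
    also have "\<dots> \<le> c * (1/2) ^ N"
      using diam IFin c_nonneg by (simp add: mult_left_mono)
    finally show ?thesis
      using assms dec_ival_name w IFin by (simp add: out_diam_def)
  qed (use diam in simp)
qed

lemma xi_if_name:
  assumes "continuous_on {0..1} f"
  shows "xi_if name f"
  unfolding xi_if_def fname_def
proof (intro conjI allI impI assms)
  show "rname (name \<circ> s) (f x)" if "x \<in> {0..1} \<and> rname s x" for s x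
    using rname_name that by blast
  fix n
  obtain N where N: "(1/2) ^ N < (1/2::real) ^ n / (c + 1)"
    using real_arch_pow_inv[of "(1/2::real) ^ n / (c + 1)" "1/2"] c_nonneg by auto
  have "c * (1/2) ^ N \<le> (c + 1) * (1/2) ^ N" by simp
  also have "\<dots> \<le> (1/2) ^ n"
    using N c_nonneg by (simp add: pos_less_divide_eq mult.commute)
  finally show "modset name n \<noteq> {}"
    using modset_name by blast
qed

end

definition zero_name :: baire where
  "zero_name = enclosure_name (\<lambda>r e. - e) (\<lambda>r e. e)"

lemma zero_enclosure_bounds: "enclosure_bounds (\<lambda>_. 0) (\<lambda>r e. - e) (\<lambda>r e. e) 1"
  by unfold_locales (auto intro: dyadic_uminus)

lemma xi_if_zero_name: "xi_if zero_name (\<lambda>_. 0)"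
  unfolding zero_name_def by (rule enclosure_bounds.xi_if_name[OF zero_enclosure_bounds]) simp

lemma mu_if_zero_name_le: "\<exists>C. \<forall>m. mu_if zero_name m \<le> C + m"
proof -
  have "m \<in> modset zero_name m" for m
    unfolding zero_name_def by (rule enclosure_bounds.modset_name[OF zero_enclosure_bounds]) simp
  then have "mu_if zero_name m \<le> nat \<lceil>log 2 (sup_norm01 (SOME f. xi_if zero_name f) + 1)\<rceil> + m"
    for m unfolding mu_if_def by (simp add: Least_le)
  then show ?thesis by blast
qed

section \<open>Tent functions\<close>

definition tent :: "real \<Rightarrow> real \<Rightarrow> real \<Rightarrow> real \<Rightarrow> real" where
  "tent h L p x = max 0 (h - L * \<bar>x - p\<bar>)"

lemma tent_antimono_dist:
  "0 \<le> L \<Longrightarrow> \<bar>x - p\<bar> \<le> \<bar>y - p\<bar> \<Longrightarrow> tent h L p y \<le> tent h L p x"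
  unfolding tent_def using mult_left_mono[of "\<bar>x - p\<bar>" "\<bar>y - p\<bar>" L]
  by (intro max.mono) auto

lemma tent_lipschitz:
  assumes "0 \<le> L"
  shows "\<bar>tent h L p x - tent h L p y\<bar> \<le> L * \<bar>x - y\<bar>"
proof -
  have "\<bar>tent h L p x - tent h L p y\<bar> \<le> \<bar>(h - L * \<bar>x - p\<bar>) - (h - L * \<bar>y - p\<bar>)\<bar>"
    unfolding tent_def by (simp add: max_def)
  also have "\<dots> = \<bar>L * (\<bar>y - p\<bar> - \<bar>x - p\<bar>)\<bar>"
    by (simp add: algebra_simps)
  also have "\<dots> = L * \<bar>\<bar>y - p\<bar> - \<bar>x - p\<bar>\<bar>"
    using assms by (simp add: abs_mult)
  also have "\<dots> \<le> L * \<bar>x - y\<bar>"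
    using assms abs_triangle_ineq3[of "y - p" "x - p"]
    by (simp add: mult_left_mono abs_minus_commute)
  finally show ?thesis .
qed

lemma tent_quasiconcave:
  assumes "a \<le> x" "x \<le> b" "0 \<le> L"
  shows "min (tent h L p a) (tent h L p b) \<le> tent h L p x"
proof (cases "x \<le> p")
  case True
  then show ?thesis using assms tent_antimono_dist[of L x p a h] by simp
next
  case False
  then show ?thesis using assms tent_antimono_dist[of L x p b h] by simp
qed

lemma tent_vanishes:
  "0 \<le> L \<Longrightarrow> L * \<delta> = h \<Longrightarrow> \<delta> \<le> \<bar>x - p\<bar> \<Longrightarrow> tent h L p x = 0"
  unfolding tent_def using mult_left_mono[of \<delta> "\<bar>x - p\<bar>" L] by simp

definition ival_nearest :: "real \<Rightarrow> real \<Rightarrow> real \<Rightarrow> real" where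
  "ival_nearest r e p = max (r - e) (min p (r + e))"

lemma ival_nearest_in: "0 \<le> e \<Longrightarrow> ival_nearest r e p \<in> {r - e..r + e}"
  by (auto simp: ival_nearest_def)

lemma ival_nearest_le: "x \<in> {r - e..r + e} \<Longrightarrow> \<bar>ival_nearest r e p - p\<bar> \<le> \<bar>x - p\<bar>"
  by (auto simp: ival_nearest_def)

(* The term max (-e) (h - 2e) is -e as soon as e \<ge> h, so that queries of radius at least the
   height of the tent are answered exactly as for the zero function. *)
definition tent_lb :: "real \<Rightarrow> real \<Rightarrow> real \<Rightarrow> real \<Rightarrow> real \<Rightarrow> real" where
  "tent_lb h L p r e =
     min (min (tent h L p (r - e)) (tent h L p (r + e)) - e) (max (- e) (h - 2 * e))"

definition tent_ub :: "real \<Rightarrow> real \<Rightarrow> real \<Rightarrow> real \<Rightarrow> real \<Rightarrow> real" where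
  "tent_ub h L p r e = max (tent h L p (ival_nearest r e p)) e"

lemma tent_bounds_enclose:
  assumes "0 \<le> L" "x \<in> {r - e..r + e}"
  shows "tent_lb h L p r e \<le> tent h L p x \<and> tent h L p x \<le> tent_ub h L p r e"
proof -
  have "min (tent h L p (r - e)) (tent h L p (r + e)) \<le> tent h L p x" "0 \<le> e"
    using tent_quasiconcave assms by auto
  then show ?thesis
    using tent_antimono_dist[OF assms(1) ival_nearest_le[OF assms(2), of p], of h]
    unfolding tent_lb_def tent_ub_def
    by (intro conjI min.coboundedI1 max.coboundedI1) linarith+
qed

lemma tent_bounds_nested:
  assumes "0 \<le> L" "0 \<le> e'" "r - e \<le> r' - e'" "r' + e' \<le> r + e"
  shows "tent_lb h L p r e \<le> tent_lb h L p r' e' \<and> tent_ub h L p r' e' \<le> tent_ub h L p r e"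
proof
  have "r' - e' \<in> {r - e..r + e}" "r' + e' \<in> {r - e..r + e}"
    using assms by auto
  then have "min (tent h L p (r - e)) (tent h L p (r + e))
      \<le> min (tent h L p (r' - e')) (tent h L p (r' + e'))"
    using tent_quasiconcave[OF _ _ assms(1)] by simp
  then show "tent_lb h L p r e \<le> tent_lb h L p r' e'"
    unfolding tent_lb_def using assms by (intro min.mono max.mono) auto
  have "ival_nearest r' e' p \<in> {r - e..r + e}"
    using ival_nearest_in[OF assms(2), of r' p] assms by auto
  then show "tent_ub h L p r' e' \<le> tent_ub h L p r e"
    unfolding tent_ub_def using assms tent_antimono_dist[OF assms(1) ival_nearest_le]
    by (intro max.mono) auto
qed

lemma max_minus_min_le:
  fixes B :: real
  shows "a - c \<le> B \<Longrightarrow> a - d \<le> B \<Longrightarrow> b - c \<le> B \<Longrightarrow> b - d \<le> B \<Longrightarrow> max a b - min c d \<le> B"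
  by (simp add: max_def min_def)

lemma tent_bounds_width:
  assumes "0 \<le> h" "0 \<le> L" "0 \<le> e"
  shows "tent_ub h L p r e - tent_lb h L p r e \<le> (L + 1) * (2 * e)"
proof -
  define n where "n = ival_nearest r e p"
  have "n \<in> {r - e..r + e}" using ival_nearest_in assms(3) by (simp add: n_def)
  then have "L * \<bar>n - (r - e)\<bar> \<le> L * (2 * e)" "L * \<bar>n - (r + e)\<bar> \<le> L * (2 * e)"
    using assms(2) by (auto intro!: mult_left_mono)
  then have "tent h L p n - tent h L p (r - e) \<le> L * (2 * e)"
    "tent h L p n - tent h L p (r + e) \<le> L * (2 * e)"
    using tent_lipschitz[OF assms(2), of h p n "r - e"] tent_lipschitz[OF assms(2), of h p n "r + e"]
    by (simp_all add: abs_le_iff)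
  moreover have "tent h L p n \<le> h" "0 \<le> tent h L p (r - e)" "0 \<le> tent h L p (r + e)"
    using assms(1,2) by (auto simp: tent_def)
  moreover have "0 \<le> L * e" using assms(2,3) by simp
  ultimately show ?thesis using assms(3)
    unfolding tent_lb_def tent_ub_def n_def[symmetric]
    by (intro max_minus_min_le) (auto simp: algebra_simps min_def max_def)
qed

lemma tent_enclosure_bounds:
  assumes "0 \<le> h" "0 \<le> L" "dyadic h" "dyadic L" "dyadic p"
  shows "enclosure_bounds (tent h L p) (tent_lb h L p) (tent_ub h L p) (L + 1)"
proof
  fix r e :: real assume "dyadic r" "dyadic e" "0 \<le> e"
  then show "dyadic (tent_lb h L p r e) \<and> dyadic (tent_ub h L p r e)"
    using assms unfolding tent_lb_def tent_ub_def tent_def ival_nearest_def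
    by (simp add: dyadic_intros)
qed (use assms tent_bounds_enclose tent_bounds_nested tent_bounds_width in auto)

lemma tent_bounds_trivial:
  assumes "0 \<le> h" "0 \<le> L" "0 \<le> e"
    and "h \<le> e \<or> (\<forall>x\<in>{r - e..r + e}. tent h L p x = 0)"
  shows "tent_lb h L p r e = - e \<and> tent_ub h L p r e = e"
proof -
  define n where "n = ival_nearest r e p"
  have range: "0 \<le> tent h L p x \<and> tent h L p x \<le> h" for x
    using assms(1,2) by (auto simp: tent_def)
  have "n \<in> {r - e..r + e}" "r - e \<in> {r - e..r + e}" "r + e \<in> {r - e..r + e}"
    using ival_nearest_in assms(3) by (auto simp: n_def)
  then have "h \<le> e \<or> tent h L p n = 0 \<and> tent h L p (r - e) = 0 \<and> tent h L p (r + e) = 0"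
    using assms(4) by blast
  then show ?thesis
    using assms(3) range[of n] range[of "r - e"] range[of "r + e"]
    unfolding tent_lb_def tent_ub_def n_def[symmetric] by (auto simp: min_def max_def)
qed

section \<open>A tent hidden from finitely many queries\<close>

lemma grid_point_avoiding:
  assumes "finite S" "card S < G" "0 < h" "\<delta> \<le> h"
  shows "\<exists>i<G. \<forall>(r, e)\<in>S. e < h \<longrightarrow> e + \<delta> \<le> \<bar>real i * (4 * h) - r\<bar>"
proof -
  define blocked where
    "blocked = (\<lambda>(r, e). {i. i < G \<and> e < h \<and> \<bar>real i * (4 * h) - r\<bar> < e + \<delta>})"
  have finite_blocked: "finite (blocked x)" for x
    by (rule finite_subset[of _ "{..<G}"]) (auto simp: blocked_def split: prod.splits)
  have "card (blocked x) \<le> 1" for x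
  proof -
    have "i = j" if "i \<in> blocked x" "j \<in> blocked x" for i j
    proof -
      have "\<bar>real i * (4 * h) - real j * (4 * h)\<bar> < 4 * h"
        using that assms(4) by (cases x) (auto simp: blocked_def)
      then have "\<bar>real i - real j\<bar> < 1"
        using assms(3) by (simp add: left_diff_distrib[symmetric] abs_mult)
      then show "i = j" by linarith
    qed
    then show ?thesis
      using card_le_Suc0_iff_eq[OF finite_blocked] by auto
  qed
  then have "card (\<Union>x\<in>S. blocked x) < G"
    using card_UN_le[OF assms(1), of blocked] sum_mono[of S "\<lambda>x. card (blocked x)" "\<lambda>_. 1"]
      assms(2) by simp
  then have "\<not> {..<G} \<subseteq> (\<Union>x\<in>S. blocked x)"
    using card_mono[of "\<Union>x\<in>S. blocked x" "{..<G}"] assms(1) by (force simp: blocked_def)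
  then show ?thesis
    by (force simp: blocked_def)
qed

lemma far_grid_point:
  fixes h \<delta> :: real
  assumes "finite W" "card W < 2 ^ (m + 1)" "h = (1/2) ^ (m + 4)" "\<delta> \<le> h"
  shows "\<exists>p. dyadic p \<and> 0 \<le> p \<and> p + \<delta> \<le> 1 \<and>
           (\<forall>w\<in>W. \<forall>r e. dec_ival w = Some (IFin r e) \<longrightarrow> e < h \<longrightarrow> e + \<delta> \<le> \<bar>p - r\<bar>)"
proof -
  have "0 < h" using assms(3) by simp
  define S where "S = {(r, e). \<exists>w\<in>W. dec_ival w = Some (IFin r e)}"
  have "S \<subseteq> (\<lambda>w. case dec_ival w of Some (IFin r e) \<Rightarrow> (r, e) | _ \<Rightarrow> (0, 0)) ` W"
    by (force simp: S_def)
  then have "finite S" "card S < 2 ^ (m + 1)"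
    using assms(1,2) card_image_le[OF assms(1)] finite_subset card_mono
    by (metis finite_imageI order.strict_trans1)+
  then obtain i where "i < (2::nat) ^ (m + 1)"
    and avoid: "\<And>r e. (r, e) \<in> S \<Longrightarrow> e < h \<Longrightarrow> e + \<delta> \<le> \<bar>real i * (4 * h) - r\<bar>"
    using grid_point_avoiding[of S _ h \<delta>] \<open>0 < h\<close> assms(4) by fastforce
  define p where "p = real i * (4 * h)"
  have "real i < real (2 ^ (m + 1))"
    using \<open>i < 2 ^ (m + 1)\<close> by (simp only: of_nat_less_iff)
  then have "real i * (4 * h) < 2 ^ (m + 1) * (4 * h)"
    using \<open>0 < h\<close> by simp
  moreover have "2 ^ (m + 1) * (4 * h) = 1/2"
    unfolding assms(3) by (simp add: power_add power_one_over)
  moreover have "h \<le> 1/2"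
    unfolding assms(3) using power_decreasing[of 1 "m + 4" "1/2::real"] by simp
  ultimately have "p + \<delta> \<le> 1"
    using assms(4) unfolding p_def by linarith
  moreover have "0 \<le> p" "dyadic p"
    using \<open>0 < h\<close> by (simp_all add: p_def assms(3) dyadic_intros)
  ultimately show ?thesis
    using avoid unfolding S_def p_def by blast
qed

lemma tent_name_eq_zero_name:
  assumes "0 < h" "0 \<le> L" "L * \<delta> = h"
    and far: "\<And>r e. dec_ival w = Some (IFin r e) \<Longrightarrow> e < h \<Longrightarrow> e + \<delta> \<le> \<bar>p - r\<bar>"
  shows "enclosure_name (tent_lb h L p) (tent_ub h L p) w = zero_name w"
  unfolding zero_name_def
proof (rule enclosure_name_cong)
  fix r e assume w: "dec_ival w = Some (IFin r e)"
  have "0 \<le> e" using dec_ival_IFinD[OF w] by blast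
  have "tent h L p x = 0" if "e < h" "x \<in> {r - e..r + e}" for x
    using far[OF w that(1)] that(2) tent_vanishes[OF assms(2,3), of x p] by auto
  then show "tent_lb h L p r e = - e \<and> tent_ub h L p r e = e"
    using tent_bounds_trivial assms(1,2) \<open>0 \<le> e\<close> by (meson less_eq_real_def not_le)
qed

lemma tent_moduli_large:
  assumes "0 \<le> L" "L * \<delta> = h" "0 < \<delta>" "0 \<le> p" "p + \<delta> \<le> 1"
    and "\<delta> \<le> (1/2) ^ \<nu>" "(1/2) ^ n < h" "\<mu> \<in> moduli (tent h L p)"
  shows "\<nu> < \<mu> n"
proof (rule ccontr)
  assume "\<not> \<nu> < \<mu> n"
  then have "(1/2::real) ^ \<nu> \<le> (1/2) ^ \<mu> n"
    by (intro power_decreasing) auto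
  then have "\<bar>p - (p + \<delta>)\<bar> \<le> (1/2) ^ \<mu> n"
    using assms(3,6) by linarith
  then have "\<bar>tent h L p p - tent h L p (p + \<delta>)\<bar> \<le> (1/2) ^ n"
    using assms(3,4,5,8) unfolding moduli_def by auto
  moreover have "tent h L p (p + \<delta>) = 0"
    using tent_vanishes[OF assms(1,2)] assms(3) by simp
  moreover have "0 < h"
    using assms(7) by (meson less_trans zero_less_power zero_less_divide_1_iff zero_less_numeral)
  ultimately show False
    using assms(7) by (simp add: tent_def)
qed

lemma tent_indistinguishable_from_zero:
  assumes "finite W" "card W < 2 ^ (m + 1)"
  shows "\<exists>\<psi> f. xi_if \<psi> f \<and> (\<forall>w\<in>W. \<psi> w = zero_name w) \<and> (\<forall>\<mu>\<in>moduli f. \<nu> < \<mu> (m + 5))"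
proof -
  define h :: real where "h = (1/2) ^ (m + 4)"
  define D where "D = max \<nu> (m + 4)"
  define \<delta> :: real where "\<delta> = (1/2) ^ D"
  define L :: real where "L = 2 ^ (D - (m + 4))"
  have "0 < h" "0 < \<delta>" "0 \<le> L" "(1/2) ^ (m + 5) < h"
    by (simp_all add: h_def \<delta>_def L_def)
  have "\<delta> \<le> h" "\<delta> \<le> (1/2) ^ \<nu>"
    unfolding \<delta>_def h_def D_def by (simp_all add: power_decreasing)
  have "D = (D - (m + 4)) + (m + 4)" by (simp add: D_def)
  then have "\<delta> = (1/2) ^ (D - (m + 4)) * h"
    unfolding \<delta>_def h_def by (metis power_add)
  then have "L * \<delta> = h"
    by (simp add: L_def power_one_over)
  obtain p where "dyadic p" "0 \<le> p" "p + \<delta> \<le> 1"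
    and far: "\<forall>w\<in>W. \<forall>r e. dec_ival w = Some (IFin r e) \<longrightarrow> e < h \<longrightarrow> e + \<delta> \<le> \<bar>p - r\<bar>"
    using far_grid_point[OF assms h_def \<open>\<delta> \<le> h\<close>] by blast
  have "dyadic h" "dyadic L"
    unfolding h_def L_def by (simp_all add: dyadic_intros)
  then interpret tent_bounds: enclosure_bounds "tent h L p" "tent_lb h L p" "tent_ub h L p" "L + 1"
    using tent_enclosure_bounds \<open>0 < h\<close> \<open>0 \<le> L\<close> \<open>dyadic p\<close> by simp
  have "xi_if tent_bounds.name (tent h L p)"
    by (rule tent_bounds.xi_if_name) (simp add: tent_def continuous_intros)
  moreover have "\<forall>w\<in>W. tent_bounds.name w = zero_name w"
    using tent_name_eq_zero_name[OF \<open>0 < h\<close> \<open>0 \<le> L\<close> \<open>L * \<delta> = h\<close>] far by blast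
  moreover have "\<forall>\<mu>\<in>moduli (tent h L p). \<nu> < \<mu> (m + 5)"
    using tent_moduli_large[OF \<open>0 \<le> L\<close> \<open>L * \<delta> = h\<close> \<open>0 < \<delta>\<close> \<open>0 \<le> p\<close> \<open>p + \<delta> \<le> 1\<close>
        \<open>\<delta> \<le> (1/2) ^ \<nu>\<close> \<open>(1/2) ^ (m + 5) < h\<close>] by blast
  ultimately show ?thesis by blast
qed

section \<open>Oracle machines see only the answers to their queries\<close>

definition oracle_queries :: "otm \<Rightarrow> baire \<Rightarrow> word \<Rightarrow> nat \<Rightarrow> word set" where
  "oracle_queries M \<phi> a T =
     (\<lambda>t. read_word (fst (snd (otm_run M \<phi> a t)) 1)) ` {t. t < T \<and> fst (otm_run M \<phi> a t) = 2}"

lemma finite_oracle_queries: "finite (oracle_queries M \<phi> a T)"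
  unfolding oracle_queries_def by simp

lemma card_oracle_queries_le: "card (oracle_queries M \<phi> a T) \<le> T"
proof -
  have "card (oracle_queries M \<phi> a T) \<le> card {t. t < T \<and> fst (otm_run M \<phi> a t) = 2}"
    unfolding oracle_queries_def by (rule card_image_le) simp
  also have "\<dots> \<le> card {..<T}" by (rule card_mono) auto
  finally show ?thesis by simp
qed

lemma otm_run_cong_queries:
  assumes "\<forall>w\<in>oracle_queries M \<phi> a T. \<psi> w = \<phi> w" "t \<le> T"
  shows "otm_run M \<psi> a t = otm_run M \<phi> a t"
  using assms(2)
proof (induction t)
  case 0
  then show ?case by (simp add: otm_run_def)
next
  case (Suc t)
  obtain q tp hs where c: "otm_run M \<phi> a t = (q, tp, hs)"
    by (cases "otm_run M \<phi> a t") auto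
  have "read_word (tp 1) \<in> oracle_queries M \<phi> a T" if "q = 2"
    unfolding oracle_queries_def using that Suc.prems c by (intro image_eqI[of _ _ t]) auto
  then have "otm_step M \<psi> (q, tp, hs) = otm_step M \<phi> (q, tp, hs)"
    using assms(1) by (auto simp: otm_step_def)
  then show ?case
    using Suc c by (simp add: otm_run_def)
qed

lemma otm_out_cong_queries:
  assumes "otm_halts M \<phi> a" "\<forall>w\<in>oracle_queries M \<phi> a (otm_time M \<phi> a). \<psi> w = \<phi> w"
  shows "otm_out M \<psi> a = otm_out M \<phi> a"
proof -
  define T where "T = otm_time M \<phi> a"
  have runs: "otm_run M \<psi> a t = otm_run M \<phi> a t" if "t \<le> T" for t
    using otm_run_cong_queries assms(2) that unfolding T_def by blast
  have halt: "fst (otm_run M \<phi> a T) = 1"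
    using assms(1) unfolding otm_halts_def T_def otm_time_def by (rule LeastI_ex)
  have first: "T \<le> t" if "fst (otm_run M \<phi> a t) = 1" for t
    unfolding T_def otm_time_def using that by (rule Least_le)
  have "otm_time M \<psi> a = T"
    unfolding otm_time_def
  proof (rule Least_equality)
    show "fst (otm_run M \<psi> a T) = 1" using runs halt by simp
  next
    fix t assume "fst (otm_run M \<psi> a t) = 1"
    then show "T \<le> t"
      using runs[of t] first[of t] by (cases "t \<le> T") auto
  qed
  then show ?thesis
    unfolding otm_out_def using runs[of T] T_def by simp
qed

section \<open>Second-order polynomials at linearly bounded arguments\<close>

lemma poly_le_power_bound: "poly (p :: nat poly) n \<le> (\<Sum>i\<le>degree p. coeff p i) * Suc n ^ degree p"
proof -
  have "poly p n = (\<Sum>i\<le>degree p. coeff p i * n ^ i)" by (rule poly_altdef)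
  also have "\<dots> \<le> (\<Sum>i\<le>degree p. coeff p i * Suc n ^ degree p)"
  proof (rule sum_mono)
    fix i assume "i \<in> {..degree p}"
    then have "n ^ i \<le> Suc n ^ degree p"
      using power_mono[of n "Suc n" i] power_increasing[of i "degree p" "Suc n"] by simp
    then show "coeff p i * n ^ i \<le> coeff p i * Suc n ^ degree p" by simp
  qed
  also have "\<dots> = (\<Sum>i\<le>degree p. coeff p i) * Suc n ^ degree p"
    by (simp add: sum_distrib_right)
  finally show ?thesis .
qed

lemma sopoly_power_bounded:
  assumes "P \<in> sopoly" and l: "\<And>m. l m \<le> C + m"
  shows "\<exists>K d. \<forall>n. P l n \<le> K * Suc n ^ d"
  using assms(1)
proof (induction rule: sopoly.induct)
  case (const_poly p)
  then show ?case using poly_le_power_bound by blast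
next
  case (apply_fn P)
  then obtain K d where K: "\<forall>n. P l n \<le> K * Suc n ^ d" by blast
  have "l (P l n) \<le> (C + K) * Suc n ^ d" for n
  proof -
    have "l (P l n) \<le> C + K * Suc n ^ d" using l[of "P l n"] K[THEN spec, of n] by linarith
    also have "\<dots> \<le> C * Suc n ^ d + K * Suc n ^ d" by simp
    finally show ?thesis by (simp add: algebra_simps)
  qed
  then show ?case by blast
next
  case (plus P Q)
  then obtain K d K' d' where K: "\<forall>n. P l n \<le> K * Suc n ^ d" "\<forall>n. Q l n \<le> K' * Suc n ^ d'"
    by blast
  have "P l n + Q l n \<le> (K + K') * Suc n ^ max d d'" for n
  proof -
    have "K * Suc n ^ d \<le> K * Suc n ^ max d d'" "K' * Suc n ^ d' \<le> K' * Suc n ^ max d d'"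
      by (simp_all add: power_increasing)
    then show ?thesis using K[THEN spec, of n] unfolding add_mult_distrib by linarith
  qed
  then show ?case by blast
next
  case (times P Q)
  then obtain K d K' d' where "\<forall>n. P l n \<le> K * Suc n ^ d" "\<forall>n. Q l n \<le> K' * Suc n ^ d'"
    by blast
  then have "P l n * Q l n \<le> (K * K') * Suc n ^ (d + d')" for n
    using mult_le_mono[of "P l n" "K * Suc n ^ d" "Q l n" "K' * Suc n ^ d'"]
    by (simp add: power_add algebra_simps)
  then show ?case by blast
qed

lemma exp_exceeds_power: "\<exists>m. K * Suc (m + 5) ^ d < (2::nat) ^ (m + 1)"
proof -
  have "eventually (\<lambda>m::nat. real K * (6 + real m) ^ d < 2 * 2 ^ m) at_top"
    by real_asymp
  then obtain m where "real K * (6 + real m) ^ d < 2 * 2 ^ m"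
    by (auto simp: eventually_at_top_linorder)
  then have "real (K * Suc (m + 5) ^ d) < real (2 ^ (m + 1))" by simp
  then show ?thesis by (simp only: of_nat_less_iff) blast
qed

lemma zero_name_few_queries:
  assumes "P \<in> sopoly" "\<And>a. otm_time M zero_name a \<le> P (mu_if zero_name) (length a)"
  shows "\<exists>m. card (oracle_queries M zero_name (replicate (m + 5) True)
                   (otm_time M zero_name (replicate (m + 5) True))) < 2 ^ (m + 1)"
proof -
  obtain C where "\<And>m. mu_if zero_name m \<le> C + m"
    using mu_if_zero_name_le by blast
  then obtain K d where time: "\<And>n. P (mu_if zero_name) n \<le> K * Suc n ^ d"
    using sopoly_power_bounded[OF assms(1)] by blast
  obtain m where m: "K * Suc (m + 5) ^ d < 2 ^ (m + 1)"
    using exp_exceeds_power by blast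
  define a where "a = replicate (m + 5) True"
  have "card (oracle_queries M zero_name a (otm_time M zero_name a)) \<le> otm_time M zero_name a"
    by (rule card_oracle_queries_le)
  also have "\<dots> \<le> K * Suc (m + 5) ^ d"
    using assms(2)[of a] time[of "m + 5"] unfolding a_def length_replicate by (rule order.trans)
  finally show ?thesis
    using m unfolding a_def by (meson order.strict_trans1)
qed

theorem mainTheorem18:
  shows "\<not> poly_time_computable xi_if mu_if xi_NN size_fn moduli"
proof
  assume "poly_time_computable xi_if mu_if xi_NN size_fn moduli"
  then obtain M P where "P \<in> sopoly" and computes: "\<And>\<psi> f. xi_if \<psi> f \<Longrightarrow>
      (\<forall>a. otm_halts M \<psi> a) \<and> (\<exists>\<mu>. xi_NN (otm_out M \<psi>) \<mu> \<and> \<mu> \<in> moduli f) \<and>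
      (\<forall>a. otm_time M \<psi> a \<le> P (mu_if \<psi>) (length a))"
    unfolding poly_time_computable_def by blast
  then obtain m where few: "card (oracle_queries M zero_name (replicate (m + 5) True)
      (otm_time M zero_name (replicate (m + 5) True))) < 2 ^ (m + 1)"
    using zero_name_few_queries[OF \<open>P \<in> sopoly\<close>] xi_if_zero_name by blast
  define a where "a = replicate (m + 5) True"
  define W where "W = oracle_queries M zero_name a (otm_time M zero_name a)"
  obtain \<psi> f where \<psi>: "xi_if \<psi> f" "\<forall>w\<in>W. \<psi> w = zero_name w"
    and needs_more: "\<forall>\<mu>\<in>moduli f. length (otm_out M zero_name a) < \<mu> (m + 5)"
    using tent_indistinguishable_from_zero[OF finite_oracle_queries few] unfolding W_def a_def
    by blast
  have "otm_out M \<psi> a = otm_out M zero_name a"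
    using otm_out_cong_queries computes[OF xi_if_zero_name] \<psi>(2) unfolding W_def by blast
  moreover obtain \<mu> where "xi_NN (otm_out M \<psi>) \<mu>" "\<mu> \<in> moduli f"
    using computes[OF \<psi>(1)] by blast
  ultimately show False
    using needs_more by (auto simp: xi_NN_def a_def)
qed

end
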